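(* Let $P>0$, let $\omega:[0,\infty)\to(0,\infty)$ be continuous, and let $\hat{x}:[0,\infty)\times\mathbb{R}\to\mathbb{R}^n$ satisfy $\hat{x}(\tau,t)=\hat{x}(\tau,t+P)$ for all $\tau,t$. For $\theta\in\mathbb{R}$ define $\Omega_\theta(t)=\theta+\int_0^t\omega(s)\,ds$ and $x_\theta(t)=\hat{x}\big(t,\Omega_\theta(t)\big)$. Let $L>0$ satisfy $L>\frac{P}{\omega(\tau)}$ for every $\tau>0$, and let $\varepsilon>0$. Suppose that $$\big\|\hat{x}(\tau+\delta,t)-\hat{x}(\tau,t)\big\|\le\varepsilon$$ for all $\tau>0$, all $t\in\mathbb{R}$ and all $\delta\in(0,L]$. Then for every $\theta\in\mathbb{R}$ and every $\tau>0$, $$\big\|x_\theta\big(\tau+T(\tau)\big)-x_\theta(\tau)\big\|\le\varepsilon,$$ where $T(\tau)>0$ is the unique solution of $P=\int_\tau^{\tau+T(\tau)}\omega(s)\,ds$.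
   Context: This arises from the multi-rate reformulation of circuit equations: $\hat{x}(\tau,t)$ is a multi-rate solution that is $P$-periodic in the fast variable $t$, $\omega$ is a positive frequency parameter, and $x_\theta$ is the single-rate signal recovered along the characteristic $t\mapsto(t,\Omega_\theta(t))$. *)

theory Defs
  imports "HOL-Analysis.Analysis"
begin

definition Omega :: "(real \<Rightarrow> real) \<Rightarrow> real \<Rightarrow> real \<Rightarrow> real" where
  "Omega \<omega> \<theta> t = \<theta> + integral {0..t} \<omega>"

definition xtheta :: "(real \<Rightarrow> real \<Rightarrow> real ^ 'n) \<Rightarrow> (real \<Rightarrow> real) \<Rightarrow> real \<Rightarrow> real \<Rightarrow> real ^ 'n" where
  "xtheta xh \<omega> \<theta> t = xh t (Omega \<omega> \<theta> t)"

definition Tper :: "real \<Rightarrow> (real \<Rightarrow> real) \<Rightarrow> real \<Rightarrow> real" where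
  "Tper P \<omega> \<tau> = (THE T. T > 0 \<and> P = integral {\<tau>..\<tau>+T} \<omega>)"

end

theory Submission
  imports Defs
begin

text \<open>
  Since \<open>\<omega> \<ge> P / L\<close>, the phase gained on \<open>[\<tau>, \<tau> + T]\<close> is strictly increasing in \<open>T\<close>
  and reaches \<open>P\<close> at some \<open>T \<le> L\<close>; this \<open>T\<close> is \<open>T(\<tau>)\<close>. Over it \<open>\<Omega>\<^sub>\<theta>\<close> advances by
  exactly \<open>P\<close>, so by periodicity in the fast variable the change of \<open>x\<^sub>\<theta>\<close> is a change of
  the slow variable alone, by \<open>T \<in> (0, L]\<close>.
\<close>

lemma integral_ge_length_mult:
  fixes f :: "real \<Rightarrow> real"
  assumes "f integrable_on {a..b}" "a \<le> b" "\<And>s. s \<in> {a..b} \<Longrightarrow> m \<le> f s"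
  shows "(b - a) * m \<le> integral {a..b} f"
proof -
  have "integral {a..b} (\<lambda>_. m) \<le> integral {a..b} f"
    using assms by (intro integral_le) auto
  with \<open>a \<le> b\<close> show ?thesis by (simp add: mult.commute)
qed

lemma integral_strict_mono_upper:
  fixes f :: "real \<Rightarrow> real"
  assumes cont: "continuous_on {a..} f" and "0 < m" and lb: "\<And>s. a \<le> s \<Longrightarrow> m \<le> f s"
    and "a \<le> y" "y < z"
  shows "integral {a..y} f < integral {a..z} f"
proof -
  have intg: "f integrable_on {u..v}" if "a \<le> u" for u v
    using that by (intro integrable_continuous_interval continuous_on_subset[OF cont]) auto
  have "integral {a..y} f + integral {y..z} f = integral {a..z} f"
    using assms intg[of a z] by (intro Henstock_Kurzweil_Integration.integral_combine) auto
  moreover have "(z - y) * m \<le> integral {y..z} f"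
    using assms intg[of y z] by (intro integral_ge_length_mult) auto
  moreover have "0 < (z - y) * m"
    using assms by simp
  ultimately show ?thesis by linarith
qed

lemma integral_reaches_level:
  fixes f :: "real \<Rightarrow> real"
  assumes cont: "continuous_on {a..} f" and "0 < m" and lb: "\<And>s. a \<le> s \<Longrightarrow> m \<le> f s"
    and "0 \<le> c"
  obtains y where "a \<le> y" "y \<le> a + c / m" "integral {a..y} f = c"
proof -
  define b where "b = a + c / m"
  have "a \<le> b"
    using assms by (simp add: b_def)
  have "f integrable_on {a..b}"
    by (intro integrable_continuous_interval continuous_on_subset[OF cont]) auto
  then have "continuous_on {a..b} (\<lambda>y. integral {a..y} f)"
    by (rule indefinite_integral_continuous_1)
  moreover have "c \<le> integral {a..b} f"
    using integral_ge_length_mult[OF \<open>f integrable_on {a..b}\<close> \<open>a \<le> b\<close>, of m] lb \<open>0 < m\<close>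
    by (simp add: b_def)
  ultimately obtain y where "a \<le> y" "y \<le> b" "integral {a..y} f = c"
    using IVT'[of "\<lambda>y. integral {a..y} f" a c b] \<open>a \<le> b\<close> \<open>0 \<le> c\<close> by auto
  then show ?thesis
    using that by (simp add: b_def)
qed

lemma Tper_eqI:
  fixes f :: "real \<Rightarrow> real"
  assumes "continuous_on {a..} f" "0 < m" "\<And>s. a \<le> s \<Longrightarrow> m \<le> f s"
    and "0 < T" "c = integral {a..a + T} f"
  shows "Tper c f a = T"
  unfolding Tper_def
proof (rule the_equality)
  show "0 < T \<and> c = integral {a..a + T} f"
    using assms by simp
  fix T' assume T': "0 < T' \<and> c = integral {a..a + T'} f"
  show "T' = T"
  proof (rule linorder_cases[of T' T])
    assume "T' < T"
    with assms T' integral_strict_mono_upper[OF assms(1-3), of "a + T'" "a + T"] show ?thesis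
      by simp
  next
    assume "T < T'"
    with assms T' integral_strict_mono_upper[OF assms(1-3), of "a + T" "a + T'"] show ?thesis
      by simp
  qed
qed

lemma Omega_add:
  assumes cont: "continuous_on {0..} \<omega>" and "0 \<le> t" "0 \<le> T"
  shows "Omega \<omega> \<theta> (t + T) = Omega \<omega> \<theta> t + integral {t..t + T} \<omega>"
proof -
  have "\<omega> integrable_on {0..t + T}"
    by (intro integrable_continuous_interval continuous_on_subset[OF cont]) auto
  then have "integral {0..t} \<omega> + integral {t..t + T} \<omega> = integral {0..t + T} \<omega>"
    using assms by (intro Henstock_Kurzweil_Integration.integral_combine) auto
  then show ?thesis
    by (simp add: Omega_def)
qed

theorem lemma1:
  fixes P L \<epsilon> :: real and \<omega> :: "real \<Rightarrow> real"
    and xh :: "real \<Rightarrow> real \<Rightarrow> real ^ 'n"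
  assumes P_pos: "P > 0"
    and \<omega>_cont: "continuous_on {0..} \<omega>"
    and \<omega>_pos: "\<And>s. s \<ge> 0 \<Longrightarrow> \<omega> s > 0"
    and periodic: "\<And>\<tau> t. \<tau> \<ge> 0 \<Longrightarrow> xh \<tau> t = xh \<tau> (t + P)"
    and L_pos: "L > 0"
    and L_bound: "\<And>\<tau>. \<tau> > 0 \<Longrightarrow> L > P / \<omega> \<tau>"
    and eps_pos: "\<epsilon> > 0"
    and slow: "\<And>\<tau> t \<delta>. \<tau> > 0 \<Longrightarrow> 0 < \<delta> \<Longrightarrow> \<delta> \<le> L \<Longrightarrow>
                 norm (xh (\<tau> + \<delta>) t - xh \<tau> t) \<le> \<epsilon>"
  shows "\<forall>\<theta> \<tau>. \<tau> > 0 \<longrightarrow>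
           norm (xtheta xh \<omega> \<theta> (\<tau> + Tper P \<omega> \<tau>) - xtheta xh \<omega> \<theta> \<tau>) \<le> \<epsilon>"
proof (intro allI impI)
  fix \<theta> \<tau> :: real assume "\<tau> > 0"
  have cont: "continuous_on {\<tau>..} \<omega>"
    using \<open>\<tau> > 0\<close> by (intro continuous_on_subset[OF \<omega>_cont]) auto
  have lb: "P / L \<le> \<omega> s" if "\<tau> \<le> s" for s
    using L_bound[of s] \<omega>_pos[of s] L_pos \<open>\<tau> > 0\<close> that
    by (simp add: divide_less_eq pos_divide_le_eq mult.commute)
  obtain y where y: "\<tau> \<le> y" "y \<le> \<tau> + L" "integral {\<tau>..y} \<omega> = P"
    using integral_reaches_level[OF cont _ lb, of P] P_pos L_pos by auto
  define T where "T = y - \<tau>"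
  have "0 < T"
    using y P_pos by (cases "y = \<tau>") (auto simp: T_def)
  have "T \<le> L" "P = integral {\<tau>..\<tau> + T} \<omega>"
    using y by (auto simp: T_def)
  then have "Tper P \<omega> \<tau> = T"
    using Tper_eqI[OF cont _ lb \<open>0 < T\<close>] P_pos L_pos by simp
  moreover have "Omega \<omega> \<theta> (\<tau> + T) = Omega \<omega> \<theta> \<tau> + P"
    using Omega_add[OF \<omega>_cont, of \<tau> T] \<open>\<tau> > 0\<close> \<open>0 < T\<close> \<open>P = _\<close> by simp
  ultimately show "norm (xtheta xh \<omega> \<theta> (\<tau> + Tper P \<omega> \<tau>) - xtheta xh \<omega> \<theta> \<tau>) \<le> \<epsilon>"
    using periodic[of "\<tau> + T" "Omega \<omega> \<theta> \<tau>", symmetric] slow[OF \<open>\<tau> > 0\<close> \<open>0 < T\<close> \<open>T \<le> L\<close>]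
      \<open>\<tau> > 0\<close> \<open>0 < T\<close>
    by (simp add: xtheta_def)
qed

end
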